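(* Let $\boldsymbol\alpha,\boldsymbol\beta\in\mathbb R^{\mathcal X}$ be probability vectors with $x_{\max}(\boldsymbol\alpha)=x_{\max}(\boldsymbol\beta)$, and let $r>0$. If $\mathcal Q'(\boldsymbol\alpha,r)\cap\mathcal Q'(\boldsymbol\beta,r)\neq\emptyset$, then $d(\boldsymbol\alpha,\boldsymbol\beta)\le r$.
   Context: $\mathcal X$ finite, $|\mathcal X|\ge2$. For $a\ge0,\zeta\in\mathbb R$: $d_1(a,\zeta)=|\zeta-a|$; $d_2(a,\zeta)=(\zeta-a)^2/\min(a,\zeta)$ if $a,\zeta>0$, else $\infty$; $d(a,\zeta)=\min(d_1,d_2)$; for vectors $d(\boldsymbol\alpha,\boldsymbol\zeta)=\max_{x\in\mathcal X}d(\alpha_x,\zeta_x)$. $x_{\max}(\boldsymbol\alpha)$ is an index of a largest entry of $\boldsymbol\alpha$, ties broken in an arbitrary but consistent way. Given $x_{\max}$, let $\mathcal X'=\mathcal X\setminus\{x_{\max}\}$. $\omega_\downarrow(a,r)=\max(\sqrt{r^2/4+ar}-r/2,\ r)$, $\omega'(a,r)=\omega_\downarrow(a,r)/(|\mathcal X|-1)$. The quadrant is $\mathcal Q'(\boldsymbol\alpha,r)=\{\boldsymbol\zeta'=(\zeta_x)_{x\in\mathcal X'}\in\mathbb R^{\mathcal X'}: 0\le\zeta_x-\alpha_x\le\omega'(\alpha_x,r)\ \forall x\in\mathcal X'\}$, with $x_{\max}=x_{\max}(\boldsymbol\alpha)$. *)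

theory Defs
  imports Complex_Main "HOL-Library.Extended_Real" "HOL-Library.FuncSet"
begin

definition d1 :: "real \<Rightarrow> real \<Rightarrow> ereal" where
  "d1 a z = ereal \<bar>z - a\<bar>"

definition d2 :: "real \<Rightarrow> real \<Rightarrow> ereal" where
  "d2 a z = (if a > 0 \<and> z > 0 then ereal ((z - a)\<^sup>2 / min a z) else \<infinity>)"

definition dist_d :: "real \<Rightarrow> real \<Rightarrow> ereal" where
  "dist_d a z = min (d1 a z) (d2 a z)"

definition dvec :: "('x::finite \<Rightarrow> real) \<Rightarrow> ('x \<Rightarrow> real) \<Rightarrow> ereal" where
  "dvec \<alpha> \<zeta> = (MAX x\<in>UNIV. dist_d (\<alpha> x) (\<zeta> x))"

definition prob_vec :: "('x::finite \<Rightarrow> real) \<Rightarrow> bool" where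
  "prob_vec \<alpha> \<longleftrightarrow> (\<forall>x. 0 \<le> \<alpha> x) \<and> sum \<alpha> UNIV = 1"

text \<open>A tie-breaking rule: a fixed function returning an index of a largest entry.\<close>
definition is_xmax_rule :: "(('x::finite \<Rightarrow> real) \<Rightarrow> 'x) \<Rightarrow> bool" where
  "is_xmax_rule xm \<longleftrightarrow> (\<forall>\<alpha> y. \<alpha> y \<le> \<alpha> (xm \<alpha>))"

definition omega_down :: "real \<Rightarrow> real \<Rightarrow> real" where
  "omega_down a r = max (sqrt (r\<^sup>2 / 4 + a * r) - r / 2) r"

definition omega' :: "nat \<Rightarrow> real \<Rightarrow> real \<Rightarrow> real" where
  "omega' n a r = omega_down a r / (real n - 1)"

definition quadrant :: "(('x::finite \<Rightarrow> real) \<Rightarrow> 'x) \<Rightarrow> ('x \<Rightarrow> real) \<Rightarrow> real \<Rightarrow> ('x \<Rightarrow> real) set" where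
  "quadrant xm \<alpha> r = {\<zeta> \<in> extensional (UNIV - {xm \<alpha>}).
      \<forall>x \<in> UNIV - {xm \<alpha>}. 0 \<le> \<zeta> x - \<alpha> x \<and> \<zeta> x - \<alpha> x \<le> omega' (card (UNIV :: 'x set)) (\<alpha> x) r}"

end

theory Submission
  imports Defs "HOL-Library.Cardinality"
begin

text \<open>
  Off the common largest coordinate m, a common point \<zeta> of both quadrants lies above \<alpha> x and
  \<beta> x, so |\<alpha> x - \<beta> x| is at most \<omega>'(min (\<alpha> x) (\<beta> x), r), hence at most
  \<omega>\<down>(min (\<alpha> x) (\<beta> x), r). At m, conservation of mass gives
  \<beta> m - \<alpha> m = \<Sum>x \<noteq> m. \<alpha> x - \<beta> x; each positive term is at most
  \<omega>'(\<beta> x, r) \<le> \<omega>'(\<alpha> m, r), since \<omega>\<down> is monotone and \<beta> x < \<alpha> x \<le> \<alpha> m, and the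
  |X| - 1 terms add up to \<omega>\<down>(\<alpha> m, r). Finally, a gap g \<le> \<omega>\<down>(a, r) above a \<ge> 0 is either
  at most r, so d1 \<le> r, or satisfies g^2 + g r \<le> a r, so d2 = g^2 / a \<le> r.
\<close>

lemma omega_down_ge: "r \<le> omega_down a r"
  unfolding omega_down_def by simp

lemma omega_down_nonneg: "0 \<le> r \<Longrightarrow> 0 \<le> omega_down a r"
  using omega_down_ge order_trans by blast

lemma omega_down_mono:
  assumes "0 \<le> r" "a \<le> b"
  shows "omega_down a r \<le> omega_down b r"
proof -
  have "sqrt (r\<^sup>2 / 4 + a * r) \<le> sqrt (r\<^sup>2 / 4 + b * r)"
    using assms by (simp add: mult_right_mono)
  then show ?thesis
    unfolding omega_down_def by (intro max.mono) auto
qed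

lemma omega'_mono: "0 \<le> r \<Longrightarrow> 2 \<le> n \<Longrightarrow> a \<le> b \<Longrightarrow> omega' n a r \<le> omega' n b r"
  unfolding omega'_def by (intro divide_right_mono omega_down_mono) auto

lemma omega'_nonneg: "0 \<le> r \<Longrightarrow> 2 \<le> n \<Longrightarrow> 0 \<le> omega' n a r"
  unfolding omega'_def by (simp add: omega_down_nonneg)

lemma omega'_le_omega_down: "0 \<le> r \<Longrightarrow> 2 \<le> n \<Longrightarrow> omega' n a r \<le> omega_down a r"
  unfolding omega'_def using omega_down_nonneg[of r a]
  by (simp add: divide_le_eq mult_le_cancel_left1)

lemma sum_omega'_remove:
  fixes m :: "'x::finite"
  assumes "2 \<le> CARD('x)"
  shows "(\<Sum>x\<in>UNIV - {m}. omega' CARD('x) a r) = omega_down a r"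
proof -
  have "real (card (UNIV - {m})) = real CARD('x) - 1"
    using assms by (simp add: card_Diff_subset of_nat_diff)
  then show ?thesis
    using assms by (simp add: omega'_def)
qed

lemma gap_sq_le_if_le_omega_down:
  assumes "0 \<le> r" "r < g" "g \<le> omega_down a r"
  shows "g\<^sup>2 + g * r \<le> a * r"
proof -
  define q where "q = r\<^sup>2 / 4 + a * r"
  have le_sqrt: "g + r / 2 \<le> sqrt q"
    using assms unfolding omega_down_def q_def by (auto simp: max_def split: if_splits)
  then have "0 < sqrt q"
    using assms by linarith
  then have "0 < q"
    by simp
  have "(g + r / 2)\<^sup>2 \<le> (sqrt q)\<^sup>2"
    using le_sqrt assms by (intro power_mono) auto
  also have "\<dots> = q"
    using \<open>0 < q\<close> by simp
  finally show ?thesis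
    unfolding q_def by (simp add: power2_eq_square algebra_simps)
qed

lemma dist_d_commute: "dist_d a b = dist_d b a"
  unfolding dist_d_def d1_def d2_def
  by (auto simp: min.commute abs_minus_commute power2_commute)

lemma dist_d_le_if_gap_le_omega_down:
  assumes "0 \<le> a" "a \<le> b" "b - a \<le> omega_down a r" "0 \<le> r"
  shows "dist_d a b \<le> ereal r"
proof (cases "b - a \<le> r")
  case True
  then have "d1 a b \<le> ereal r"
    using assms by (simp add: d1_def)
  then show ?thesis
    unfolding dist_d_def by (simp add: min.coboundedI1)
next
  case False
  have "(b - a)\<^sup>2 + (b - a) * r \<le> a * r"
    using gap_sq_le_if_le_omega_down False assms by simp
  moreover have "0 \<le> (b - a) * r"
    using assms by simp
  ultimately have gap_sq: "(b - a)\<^sup>2 \<le> a * r"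
    by linarith
  moreover have "0 < (b - a)\<^sup>2"
    using False assms by simp
  ultimately have "0 < a * r"
    by linarith
  then have "0 < a"
    using assms by (simp add: zero_less_mult_iff)
  with gap_sq have "d2 a b \<le> ereal r"
    using assms by (simp add: d2_def min_def pos_divide_le_eq mult.commute)
  then show ?thesis
    unfolding dist_d_def by (simp add: min.coboundedI2)
qed

lemma dist_d_le_if_gaps_le_omega_down:
  assumes "0 \<le> a" "0 \<le> b" "0 \<le> r"
    and "b - a \<le> omega_down a r" "a - b \<le> omega_down b r"
  shows "dist_d a b \<le> ereal r"
proof (cases "a \<le> b")
  case True
  then show ?thesis
    using dist_d_le_if_gap_le_omega_down assms by blast
next
  case False
  then show ?thesis
    using dist_d_le_if_gap_le_omega_down[of b a r] assms by (simp add: dist_d_commute)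
qed

lemma dvec_le_iff: "dvec \<alpha> \<beta> \<le> e \<longleftrightarrow> (\<forall>x. dist_d (\<alpha> x) (\<beta> x) \<le> e)"
  unfolding dvec_def by (simp add: Max_le_iff)

lemma diff_le_omega'_if_in_quadrants:
  fixes x :: "'x::finite"
  assumes "\<zeta> \<in> quadrant xm \<alpha> r" "\<zeta> \<in> quadrant xm \<beta> r" "xm \<alpha> = xm \<beta>" "x \<noteq> xm \<alpha>"
  shows "\<alpha> x - \<beta> x \<le> omega' CARD('x) (\<beta> x) r"
proof -
  have "0 \<le> \<zeta> x - \<alpha> x" "\<zeta> x - \<beta> x \<le> omega' CARD('x) (\<beta> x) r"
    using assms unfolding quadrant_def by auto
  then show ?thesis
    by linarith
qed

lemma sum_diff_remove_eq:
  fixes \<alpha> \<beta> :: "'x::finite \<Rightarrow> real"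
  assumes "sum \<alpha> UNIV = sum \<beta> UNIV"
  shows "\<beta> m - \<alpha> m = (\<Sum>x\<in>UNIV - {m}. \<alpha> x - \<beta> x)"
  using assms sum.remove[of UNIV m \<alpha>] sum.remove[of UNIV m \<beta>]
  by (simp add: sum_subtractf)

lemma max_coord_gap_le_omega_down:
  fixes \<alpha> \<beta> :: "'x::finite \<Rightarrow> real"
  assumes "2 \<le> CARD('x)" "0 \<le> r"
    and "sum \<alpha> UNIV = sum \<beta> UNIV"
    and "\<And>x. 0 \<le> \<beta> x" and "\<And>x. \<alpha> x \<le> \<alpha> m"
    and off_max: "\<And>x. x \<noteq> m \<Longrightarrow> \<alpha> x - \<beta> x \<le> omega' CARD('x) (\<beta> x) r"
  shows "\<beta> m - \<alpha> m \<le> omega_down (\<alpha> m) r"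
proof -
  have "\<alpha> x - \<beta> x \<le> omega' CARD('x) (\<alpha> m) r" if "x \<noteq> m" for x
  proof (cases "\<alpha> x \<le> \<beta> x")
    case True
    then show ?thesis
      using omega'_nonneg[of r "CARD('x)" "\<alpha> m"] assms(1,2) by linarith
  next
    case False
    then have "omega' CARD('x) (\<beta> x) r \<le> omega' CARD('x) (\<alpha> m) r"
      using assms by (intro omega'_mono) (auto intro: order_trans[of _ "\<alpha> x"])
    then show ?thesis
      using off_max[OF that] by linarith
  qed
  then have "(\<Sum>x\<in>UNIV - {m}. \<alpha> x - \<beta> x) \<le> (\<Sum>x\<in>UNIV - {m}. omega' CARD('x) (\<alpha> m) r)"
    by (intro sum_mono) auto
  then show ?thesis
    using sum_diff_remove_eq[OF assms(3)] sum_omega'_remove[OF assms(1)] by simp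
qed

theorem lemma5:
  fixes xm :: "('x::finite \<Rightarrow> real) \<Rightarrow> 'x"
    and \<alpha> \<beta> :: "'x \<Rightarrow> real" and r :: real
  assumes "card (UNIV :: 'x set) \<ge> 2"
    and "is_xmax_rule xm"
    and "prob_vec \<alpha>" and "prob_vec \<beta>"
    and "xm \<alpha> = xm \<beta>"
    and "r > 0"
    and "quadrant xm \<alpha> r \<inter> quadrant xm \<beta> r \<noteq> {}"
  shows "dvec \<alpha> \<beta> \<le> ereal r"
proof -
  obtain \<zeta> where \<zeta>: "\<zeta> \<in> quadrant xm \<alpha> r" "\<zeta> \<in> quadrant xm \<beta> r"
    using assms(7) by blast
  define m where "m = xm \<alpha>"
  have nonneg: "\<And>x. 0 \<le> \<alpha> x" "\<And>x. 0 \<le> \<beta> x" and mass: "sum \<alpha> UNIV = sum \<beta> UNIV"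
    using assms(3,4) by (auto simp: prob_vec_def)
  have max: "\<And>x. \<alpha> x \<le> \<alpha> m" "\<And>x. \<beta> x \<le> \<beta> m"
    using assms(2,5) unfolding is_xmax_rule_def m_def by metis+
  have off_max: "\<alpha> x - \<beta> x \<le> omega' CARD('x) (\<beta> x) r"
    "\<beta> x - \<alpha> x \<le> omega' CARD('x) (\<alpha> x) r" if "x \<noteq> m" for x
    using diff_le_omega'_if_in_quadrants \<zeta> assms(5) that by (metis m_def)+
  have "dist_d (\<alpha> x) (\<beta> x) \<le> ereal r" for x
  proof (cases "x = m")
    case True
    have "\<beta> m - \<alpha> m \<le> omega_down (\<alpha> m) r" "\<alpha> m - \<beta> m \<le> omega_down (\<beta> m) r"
      using max_coord_gap_le_omega_down[of r \<alpha> \<beta>] max_coord_gap_le_omega_down[of r \<beta> \<alpha>]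
        assms(1,6) mass nonneg max off_max by auto
    then show ?thesis
      using True nonneg assms(6) by (simp add: dist_d_le_if_gaps_le_omega_down)
  next
    case False
    then show ?thesis
      using off_max[OF False] omega'_le_omega_down[of r "CARD('x)"] nonneg assms(1,6)
      by (intro dist_d_le_if_gaps_le_omega_down) (auto intro: order_trans)
  qed
  then show ?thesis
    by (simp add: dvec_le_iff)
qed

end
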